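(* Let $S=\langle n_1<n_2<\cdots<n_e\rangle$ be a numerical semigroup with $\mathrm{msg}(S)=\{n_1<\cdots<n_e\}$, $n_1\geq 3$ and $e\geq 2$. If $S$ is a MANS-semigroup such that $n_e\bmod n_1<n_1-1$, then $n_e+1$ is suitably monotone for $S$.
   Context: $\mathbb{N}=\{0,1,2,\ldots\}$. A numerical semigroup is a subset $S\subseteq\mathbb{N}$ closed under addition, containing $0$, with finite complement; $\langle A\rangle$ is the submonoid generated by $A$; $\mathrm{msg}(S)$ is its unique finite minimal system of generators. For $n\in S\setminus\{0\}$, $\mathrm{Ap}(S,n)=\{s\in S:s-n\notin S\}=\{w(0),\ldots,w(n-1)\}$ with $w(i)$ the least element of $S$ congruent to $i$ mod $n$. $S$ is a MANS-semigroup if $w(1)<\cdots<w(\mathrm{m}(S)-1)$ for $\mathrm{Ap}(S,\mathrm{m}(S))$, $\mathrm{m}(S)$ the least element of $S\setminus\{0\}$. For a MANS-semigroup $S$ with $\mathrm{msg}(S)=\{n_1<\cdots<n_e\}$, $e\geq2$, and $\mathrm{Ap}(S,n_1)=\{w(0),\ldots,w(n_1-1)\}$, $n\in\mathbb{N}$ is suitably monotone for $S$ if (i) $n_e<n$, (ii) $n_e\bmod n_1<n\bmod n_1$, and (iii) $w(n\bmod n_1-1)<n<w(n\bmod n_1)$. $a\bmod b$ is the remainder of the division of $a$ by $b$. *)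

theory Defs
  imports Main
begin

definition numerical_semigroup :: "nat set \<Rightarrow> bool" where
  "numerical_semigroup S \<longleftrightarrow> 0 \<in> S \<and> (\<forall>a\<in>S. \<forall>b\<in>S. a + b \<in> S) \<and> finite (UNIV - S)"

inductive_set monoid_gen :: "nat set \<Rightarrow> nat set" for A :: "nat set" where
  zero: "0 \<in> monoid_gen A"
| add: "a \<in> A \<Longrightarrow> x \<in> monoid_gen A \<Longrightarrow> a + x \<in> monoid_gen A"

definition is_msg :: "nat set \<Rightarrow> nat set \<Rightarrow> bool" where
  "is_msg S A \<longleftrightarrow> monoid_gen A = S \<and> (\<forall>B. B \<subset> A \<longrightarrow> monoid_gen B \<noteq> S)"

definition multiplicity :: "nat set \<Rightarrow> nat" where
  "multiplicity S = (LEAST x. x \<in> S \<and> 0 < x)"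

definition apery_w :: "nat set \<Rightarrow> nat \<Rightarrow> nat \<Rightarrow> nat" where
  "apery_w S n i = (LEAST s. s \<in> S \<and> s mod n = i mod n)"

definition MANS :: "nat set \<Rightarrow> bool" where
  "MANS S \<longleftrightarrow> (\<forall>i j. 1 \<le> i \<and> i < j \<and> j \<le> multiplicity S - 1 \<longrightarrow>
      apery_w S (multiplicity S) i < apery_w S (multiplicity S) j)"

definition suitably_monotone :: "nat set \<Rightarrow> nat set \<Rightarrow> nat \<Rightarrow> bool" where
  "suitably_monotone S A n \<longleftrightarrow>
     Max A < n \<and> Max A mod Min A < n mod Min A \<and>
     apery_w S (Min A) (n mod Min A - 1) < n \<and> n < apery_w S (Min A) (n mod Min A)"

end

(* Write m = n_1, M = n_e and w for the Apery function of S with respect to m.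
   A minimal generator is not of the form s + k m with s in S and k >= 1, so
   M = w(M mod m); with r = M mod m we have r >= 1 because M <> m, and MANS
   gives M < w(r+1).  It remains to exclude M + 1 = w(r+1).  Then M + 1,
   which exceeds every generator, splits as x + y with x, y positive elements
   of S; both are Apery elements, with residues i, j in [1, r] and i + j = r + 1.
   If, say, i >= 2, then w(i-1) < x by MANS, so w(i-1) + y is an element of S below
   M + 1 in the class of r, hence equal to w(r) = M: a forbidden decomposition
   of the generator M.  If i = j = 1, then r = 1 and x = y = w(1), so
   2 w(1) = w(1) + 1 puts 1 in S, contradicting m >= 3. *)

theory Submission
  imports Defs
begin

lemma Min_less_Max:
  assumes "finite A" "2 \<le> card A"
  shows "Min A < Max A"
proof -
  have "\<not> card A \<le> Suc 0"
    using assms(2) by simp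
  then obtain a b where "a \<in> A" "b \<in> A" "a \<noteq> b"
    using card_le_Suc0_iff_eq[OF assms(1)] by blast
  then have "Min A \<le> a" "Min A \<le> b" "a \<le> Max A" "b \<le> Max A"
    using assms(1) by simp_all
  then show ?thesis
    using \<open>a \<noteq> b\<close> by (cases a b rule: linorder_cases) (blast intro: le_less_trans less_le_trans)+
qed

lemma monoid_gen_add:
  "x \<in> monoid_gen A \<Longrightarrow> y \<in> monoid_gen A \<Longrightarrow> x + y \<in> monoid_gen A"
  by (induction x rule: monoid_gen.induct) (auto simp: add.assoc intro: monoid_gen.intros)

lemma generators_subset_monoid_gen: "A \<subseteq> monoid_gen A"
  using monoid_gen.add[OF _ monoid_gen.zero] by fastforce

lemma monoid_gen_minimal:
  assumes "A \<subseteq> monoid_gen B"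
  shows "monoid_gen A \<subseteq> monoid_gen B"
proof
  show "x \<in> monoid_gen B" if "x \<in> monoid_gen A" for x
    using that by induction (use assms in \<open>auto intro: monoid_gen.zero monoid_gen_add\<close>)
qed

lemma monoid_gen_mono: "A \<subseteq> B \<Longrightarrow> monoid_gen A \<subseteq> monoid_gen B"
  using generators_subset_monoid_gen monoid_gen_minimal by blast

lemma monoid_gen_less_remove:
  "x \<in> monoid_gen A \<Longrightarrow> x < a \<Longrightarrow> x \<in> monoid_gen (A - {a})"
  by (induction x rule: monoid_gen.induct) (auto intro: monoid_gen.intros)

lemma monoid_gen_ge_Min:
  assumes "finite A"
  shows "x \<in> monoid_gen A \<Longrightarrow> 0 < x \<Longrightarrow> Min A \<le> x"
  by (induction x rule: monoid_gen.induct) (use assms in \<open>auto intro: trans_le_add1\<close>)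

lemma monoid_gen_decompose:
  assumes "x \<in> monoid_gen A" "x \<notin> A" "0 < x"
  obtains a y where "a \<in> A" "y \<in> monoid_gen A" "0 < y" "x = a + y"
  using assms(1)
proof cases
  case (add a y)
  then show thesis
    using that assms(2) by (metis add_0_right gr0I)
qed (use assms in simp)

lemma is_msg_generator_notin:
  assumes "is_msg S A" "a \<in> A"
  shows "a \<notin> monoid_gen (A - {a})"
proof
  assume "a \<in> monoid_gen (A - {a})"
  then have "A \<subseteq> monoid_gen (A - {a})"
    using generators_subset_monoid_gen[of "A - {a}"] by blast
  then have "monoid_gen (A - {a}) = monoid_gen A"
    using monoid_gen_minimal monoid_gen_mono[of "A - {a}" A] by blast
  moreover have "A - {a} \<subset> A"
    using \<open>a \<in> A\<close> by blast
  ultimately show False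
    using assms(1) unfolding is_msg_def by simp
qed

lemma is_msg_zero_notin: "is_msg S A \<Longrightarrow> 0 \<notin> A"
  using is_msg_generator_notin monoid_gen.zero by metis

lemma is_msg_irreducible:
  assumes "is_msg S A" "a \<in> A" "x \<in> S" "y \<in> S" "a = x + y"
  shows "x = 0 \<or> y = 0"
proof (rule ccontr)
  assume "\<not> (x = 0 \<or> y = 0)"
  then have "x < a" "y < a"
    using \<open>a = x + y\<close> by auto
  moreover have "x \<in> monoid_gen A" "y \<in> monoid_gen A"
    using assms(1,3,4) unfolding is_msg_def by auto
  ultimately have "x + y \<in> monoid_gen (A - {a})"
    by (intro monoid_gen_add monoid_gen_less_remove)
  then show False
    using is_msg_generator_notin[OF assms(1,2)] \<open>a = x + y\<close> by simp
qed

lemma numerical_semigroup_mult: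
  assumes "numerical_semigroup S" "n \<in> S"
  shows "k * n \<in> S"
proof (induction k)
  case 0
  then show ?case
    using assms(1) unfolding numerical_semigroup_def by simp
next
  case (Suc k)
  have "n + k * n \<in> S"
    using assms Suc unfolding numerical_semigroup_def by blast
  then show ?case
    by simp
qed

lemma numerical_semigroup_ge_in:
  assumes "numerical_semigroup S"
  obtains N where "\<And>x. N \<le> x \<Longrightarrow> x \<in> S"
proof -
  have "finite (UNIV - S)"
    using assms unfolding numerical_semigroup_def by simp
  then obtain N where "\<forall>x\<in>UNIV - S. x < N"
    unfolding finite_nat_set_iff_bounded by blast
  then have "x \<in> S" if "N \<le> x" for x
    using that by (meson DiffI UNIV_I not_le)
  then show thesis
    using that by blast
qed

lemma multiplicity_le: "x \<in> S \<Longrightarrow> 0 < x \<Longrightarrow> multiplicity S \<le> x"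
  unfolding multiplicity_def by (rule Least_le) simp

lemma multiplicity_pos:
  assumes "numerical_semigroup S"
  shows "0 < multiplicity S"
proof -
  obtain N where "\<And>x. N \<le> x \<Longrightarrow> x \<in> S"
    using numerical_semigroup_ge_in[OF assms] by blast
  then have "Suc N \<in> S \<and> 0 < Suc N"
    by simp
  then have "multiplicity S \<in> S \<and> 0 < multiplicity S"
    unfolding multiplicity_def by (rule LeastI)
  then show ?thesis
    by simp
qed

lemma multiplicity_is_msg:
  assumes "is_msg S A" "finite A" "A \<noteq> {}"
  shows "multiplicity S = Min A"
  unfolding multiplicity_def
proof (rule Least_equality)
  have "Min A \<in> A"
    using assms(2,3) by simp
  then show "Min A \<in> S \<and> 0 < Min A"
    using assms(1) is_msg_zero_notin generators_subset_monoid_gen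
    unfolding is_msg_def by (metis gr0I subsetD)
  show "Min A \<le> x" if "x \<in> S \<and> 0 < x" for x
    using that assms(1,2) monoid_gen_ge_Min unfolding is_msg_def by blast
qed

lemma apery_w_in:
  assumes "numerical_semigroup S" "0 < n"
  shows "apery_w S n i \<in> S" and "apery_w S n i mod n = i mod n"
proof -
  obtain N where N: "\<And>x. N \<le> x \<Longrightarrow> x \<in> S"
    using numerical_semigroup_ge_in[OF assms(1)] by blast
  have "N \<le> i mod n + N * n"
    using assms(2) by (simp add: trans_le_add2)
  then have "i mod n + N * n \<in> S \<and> (i mod n + N * n) mod n = i mod n"
    using N by simp
  then have "apery_w S n i \<in> S \<and> apery_w S n i mod n = i mod n"
    unfolding apery_w_def by (rule LeastI)
  then show "apery_w S n i \<in> S" and "apery_w S n i mod n = i mod n"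
    by auto
qed

lemma apery_w_le: "x \<in> S \<Longrightarrow> x mod n = i mod n \<Longrightarrow> apery_w S n i \<le> x"
  unfolding apery_w_def by (rule Least_le) simp

lemma apery_w_zero: "0 \<in> S \<Longrightarrow> apery_w S n 0 = 0"
  using apery_w_le[of 0 S n 0] by simp

lemma apery_w_pos:
  assumes "numerical_semigroup S" "0 < n" "i mod n \<noteq> 0"
  shows "0 < apery_w S n i"
  using apery_w_in(2)[OF assms(1,2), of i] assms(3) by (metis mod_0 gr0I)

lemma apery_w_summand:
  assumes "numerical_semigroup S" "0 < n" "x \<in> S" "y \<in> S" "x + y = apery_w S n k"
  shows "apery_w S n (x mod n) = x"
proof (rule antisym)
  show "apery_w S n (x mod n) \<le> x"
    using assms(3) by (rule apery_w_le) simp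
  let ?v = "apery_w S n (x mod n) + y"
  have "?v \<in> S"
    using assms(1-4) apery_w_in(1) unfolding numerical_semigroup_def by blast
  moreover have "?v mod n = k mod n"
    using apery_w_in[OF assms(1,2)] assms(5) by (metis mod_add_left_eq mod_mod_trivial)
  ultimately have "apery_w S n k \<le> ?v"
    by (rule apery_w_le)
  then show "x \<le> apery_w S n (x mod n)"
    using assms(5) by simp
qed

lemma apery_w_generator:
  assumes "numerical_semigroup S" "is_msg S A" "a \<in> A" "n \<in> S" "0 < n" "a \<noteq> n"
  shows "apery_w S n (a mod n) = a"
proof -
  let ?v = "apery_w S n (a mod n)"
  have "a \<in> S"
    using assms(2,3) generators_subset_monoid_gen unfolding is_msg_def by blast
  then have "?v \<le> a"
    by (rule apery_w_le) simp
  moreover have "?v mod n = a mod n"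
    using apery_w_in(2)[OF assms(1,5)] by simp
  ultimately obtain k where k: "a = ?v + k * n"
    by (metis add.commute le_add_diff_inverse mod_eq_dvd_iff_nat dvd_def mult.commute)
  show ?thesis
  proof (cases k)
    case 0
    then show ?thesis using k by simp
  next
    case (Suc j)
    then have "a = n + (?v + j * n)"
      using k by simp
    moreover have "?v + j * n \<in> S"
      using assms(1,4,5) apery_w_in(1) numerical_semigroup_mult
      unfolding numerical_semigroup_def by blast
    ultimately have "?v + j * n = 0"
      using is_msg_irreducible[OF assms(2,3,4)] assms(5) by blast
    then show ?thesis
      using \<open>a = n + (?v + j * n)\<close> assms(6) by simp
  qed
qed

lemma MANS_apery_less:
  "MANS S \<Longrightarrow> 1 \<le> i \<Longrightarrow> i < j \<Longrightarrow> j < multiplicity S \<Longrightarrow>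
    apery_w S (multiplicity S) i < apery_w S (multiplicity S) j"
  unfolding MANS_def by auto

lemma MANS_apery_residue_bounds:
  fixes S :: "nat set"
  defines "m \<equiv> multiplicity S"
  assumes "numerical_semigroup S" "MANS S" "x \<in> S" "0 < x"
    and "apery_w S m (x mod m) = x" "x < apery_w S m k" "1 \<le> k" "k < m"
  shows "1 \<le> x mod m" and "x mod m < k"
proof -
  have "0 < m"
    unfolding m_def using assms(2) by (rule multiplicity_pos)
  have "apery_w S m 0 = 0"
    using assms(2) apery_w_zero unfolding numerical_semigroup_def by blast
  then show "1 \<le> x mod m"
    using assms(5,6) by (metis less_one not_le neq0_conv)
  have "x mod m \<noteq> k"
    using assms(6,7) by auto
  moreover have "\<not> k < x mod m"
  proof
    assume "k < x mod m"
    then have "apery_w S m k < apery_w S m (x mod m)"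
      using MANS_apery_less[OF assms(3,8)] \<open>0 < m\<close> unfolding m_def by simp
    then show False
      using assms(6,7) by simp
  qed
  ultimately show "x mod m < k"
    by simp
qed

lemma MANS_apery_lower_summand:
  fixes S :: "nat set"
  defines "m \<equiv> multiplicity S"
  assumes "numerical_semigroup S" "MANS S" "x \<in> S" "y \<in> S"
    and "apery_w S m (x mod m) = x" "2 \<le> x mod m" "x + y = apery_w S m r + 1"
  shows "apery_w S m r = apery_w S m (x mod m - 1) + y"
proof (rule antisym)
  let ?i = "x mod m"
  let ?v = "apery_w S m (?i - 1) + y"
  have "0 < m"
    unfolding m_def using assms(2) by (rule multiplicity_pos)
  have "apery_w S m (?i - 1) < x"
    using MANS_apery_less[OF assms(3), of "?i - 1" ?i] assms(6,7) \<open>0 < m\<close>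
    unfolding m_def by simp
  then show "?v \<le> apery_w S m r"
    using assms(8) by simp
  have "?v \<in> S"
    using assms(2,5) apery_w_in(1)[OF assms(2) \<open>0 < m\<close>]
    unfolding numerical_semigroup_def by blast
  moreover have "(?v + 1) mod m = (apery_w S m r + 1) mod m"
  proof -
    have "(?v + 1) mod m = (?i - 1 + 1 + y) mod m"
      using apery_w_in(2)[OF assms(2) \<open>0 < m\<close>]
      by (metis add.commute add.left_commute mod_add_left_eq mod_mod_trivial)
    also have "\<dots> = (x + y) mod m"
      using assms(7) by (simp add: mod_add_left_eq)
    finally show ?thesis
      using assms(8) by simp
  qed
  then have "?v mod m = apery_w S m r mod m"
    by (simp add: nat_mod_eq_iff)
  then have "?v mod m = r mod m"
    using apery_w_in(2)[OF assms(2) \<open>0 < m\<close>] by simp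
  ultimately show "apery_w S m r \<le> ?v"
    by (rule apery_w_le)
qed

lemma MANS_apery_succ_reducible:
  fixes S :: "nat set"
  defines "m \<equiv> multiplicity S"
  assumes "numerical_semigroup S" "MANS S" "1 \<le> r" "r + 1 < m"
    and "apery_w S m (r + 1) = apery_w S m r + 1"
    and "x \<in> S" "y \<in> S" "0 < x" "0 < y" "x + y = apery_w S m r + 1"
  shows "\<exists>p q. p \<in> S \<and> q \<in> S \<and> 0 < p \<and> 0 < q \<and> apery_w S m r = p + q"
proof -
  have "0 < m"
    unfolding m_def using assms(2) by (rule multiplicity_pos)
  have sum: "x + y = apery_w S m (r + 1)"
    using assms(6,11) by simp
  have x_apery: "apery_w S m (x mod m) = x"
    using apery_w_summand[OF assms(2) \<open>0 < m\<close> assms(7,8) sum] .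
  have y_apery: "apery_w S m (y mod m) = y"
    using apery_w_summand[OF assms(2) \<open>0 < m\<close> assms(8,7)] sum by (simp add: add.commute)
  have "x < apery_w S m (r + 1)" "y < apery_w S m (r + 1)"
    using assms(6,9,10,11) by simp_all
  then have x_res: "1 \<le> x mod m" "x mod m < r + 1" and y_res: "1 \<le> y mod m" "y mod m < r + 1"
    using MANS_apery_residue_bounds[OF assms(2,3), folded m_def] assms(5,7-10) x_apery y_apery
    by (metis le_add2)+
  have "(x mod m + y mod m) mod m = (r + 1) mod m"
    using apery_w_in(2)[OF assms(2) \<open>0 < m\<close>, of r] assms(11) by (metis mod_add_eq)
  then have res_sum: "x mod m + y mod m = r + 1"
    using x_res y_res assms(5) by (cases "x mod m + y mod m < m") (auto simp: le_mod_geq)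
  consider "2 \<le> x mod m" | "2 \<le> y mod m" | "x mod m = 1" "y mod m = 1"
    using x_res(1) y_res(1) by linarith
  then show ?thesis
  proof cases
    case 1
    have "apery_w S m r = apery_w S m (x mod m - 1) + y"
      using MANS_apery_lower_summand[OF assms(2,3), folded m_def] assms(7,8,11) x_apery 1 by blast
    moreover have "0 < apery_w S m (x mod m - 1)"
      using apery_w_pos[OF assms(2) \<open>0 < m\<close>] 1 x_res assms(5) by simp
    ultimately show ?thesis
      using apery_w_in(1)[OF assms(2) \<open>0 < m\<close>] assms(8,10) by blast
  next
    case 2
    have "apery_w S m r = apery_w S m (y mod m - 1) + x"
      using MANS_apery_lower_summand[OF assms(2,3), folded m_def] assms(7,8,11) y_apery 2
      by (simp add: add.commute)
    moreover have "0 < apery_w S m (y mod m - 1)"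
      using apery_w_pos[OF assms(2) \<open>0 < m\<close>] 2 y_res assms(5) by simp
    ultimately show ?thesis
      using apery_w_in(1)[OF assms(2) \<open>0 < m\<close>] assms(7,9) by blast
  next
    case 3
    then have "x = apery_w S m r" "y = apery_w S m r"
      using res_sum x_apery y_apery by auto
    then have "1 \<in> S"
      using assms(7,11) by simp
    then have "m \<le> 1"
      unfolding m_def by (simp add: multiplicity_le)
    then show ?thesis
      using assms(4,5) by simp
  qed
qed

lemma MANS_apery_generator_succ_less:
  fixes S A :: "nat set"
  defines "m \<equiv> multiplicity S"
  assumes "numerical_semigroup S" "MANS S" "is_msg S A"
    and "apery_w S m r \<in> A" "apery_w S m r + 1 \<notin> A" "1 \<le> r" "r + 1 < m"
  shows "apery_w S m r + 1 < apery_w S m (r + 1)"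
proof -
  let ?a = "apery_w S m r"
  have "?a < apery_w S m (r + 1)"
    using MANS_apery_less[OF assms(3,7), folded m_def] assms(8) by simp
  moreover have "apery_w S m (r + 1) \<noteq> ?a + 1"
  proof
    assume succ: "apery_w S m (r + 1) = ?a + 1"
    have "0 < m"
      unfolding m_def using assms(2) by (rule multiplicity_pos)
    have gen: "monoid_gen A = S"
      using assms(4) unfolding is_msg_def by simp
    have "?a + 1 \<in> monoid_gen A"
      using apery_w_in(1)[OF assms(2) \<open>0 < m\<close>, of "r + 1"] succ gen by simp
    then obtain b y where "b \<in> A" "y \<in> monoid_gen A" "0 < y" "?a + 1 = b + y"
      using assms(6) by (rule monoid_gen_decompose) simp
    moreover have "0 < b" "b \<in> S"
      using \<open>b \<in> A\<close> is_msg_zero_notin[OF assms(4)] generators_subset_monoid_gen gen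
      by (auto intro: gr0I)
    ultimately obtain p q where "p \<in> S" "q \<in> S" "0 < p" "0 < q" "?a = p + q"
      using gen MANS_apery_succ_reducible[OF assms(2,3), folded m_def] assms(7,8) succ by metis
    then show False
      using is_msg_irreducible[OF assms(4,5), of p q] by simp
  qed
  ultimately show ?thesis
    by simp
qed

theorem proposition4p13:
  fixes S A :: "nat set"
  assumes "numerical_semigroup S"
    and "is_msg S A"
    and "finite A"
    and "card A \<ge> 2"
    and "Min A \<ge> 3"
    and "MANS S"
    and "Max A mod Min A < Min A - 1"
  shows "suitably_monotone S A (Max A + 1)"
proof -
  define m M r where "m = Min A" and "M = Max A" and "r = M mod m"
  have "A \<noteq> {}"
    using assms(4) by auto
  then have "m \<in> A" "M \<in> A" "multiplicity S = m"
    using assms(2,3) multiplicity_is_msg unfolding m_def M_def by auto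
  have "m < M"
    using Min_less_Max[OF assms(3,4)] unfolding m_def M_def .
  have "m \<in> S"
    using \<open>m \<in> A\<close> assms(2) generators_subset_monoid_gen unfolding is_msg_def by blast
  have w_r: "apery_w S m r = M"
    unfolding r_def using apery_w_generator[OF assms(1,2) \<open>M \<in> A\<close> \<open>m \<in> S\<close>] \<open>m < M\<close> assms(5)
    unfolding m_def by simp
  have "1 \<le> r"
    using w_r apery_w_zero[of S m] \<open>m \<in> S\<close> \<open>m < M\<close> assms(1)
    unfolding numerical_semigroup_def by (metis less_one not_le not_less0)
  have "r + 1 < m"
    using assms(7) unfolding r_def m_def M_def by simp
  have "M + 1 \<notin> A"
    using assms(3) unfolding M_def by (metis Max_ge add_le_same_cancel1 not_one_le_zero)
  then have "M + 1 < apery_w S m (r + 1)"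
    using MANS_apery_generator_succ_less[OF assms(1,6,2), of r] \<open>multiplicity S = m\<close> w_r
      \<open>M \<in> A\<close> \<open>1 \<le> r\<close> \<open>r + 1 < m\<close> by simp
  moreover have "(M + 1) mod m = r + 1"
    using \<open>r + 1 < m\<close> unfolding r_def by (simp add: mod_Suc)
  ultimately show ?thesis
    unfolding suitably_monotone_def using w_r \<open>m < M\<close>
    by (simp flip: m_def M_def add: r_def)
qed

end
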